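(* Let $\mathbf{z} = \{z(i_1i_2i_3)\}_{(i_1,i_2,i_3)\in\{0,1\}^3} \in \mathbb{Z}^8$ satisfy, for some $(i_1,i_2,i_3) \in \{0,1\}^3$, one of the following: (1) $z(i_1i_2i_3),\ z(i_1^*i_2i_3),\ z(i_1^*i_2^*i_3),\ z(i_1^*i_2i_3^* )$ are all $>0$; (2) $z(i_1i_2i_3),\ z(i_1i_2^*i_3),\ z(i_1^*i_2^*i_3),\ z(i_1i_2^*i_3^* )$ are all $>0$; (3) $z(i_1i_2i_3),\ z(i_1i_2i_3^* ),\ z(i_1^*i_2i_3^* ),\ z(i_1i_2^*i_3^* )$ are all $>0$. Then $\mathbf{z}$ is not a move for $M'$, i.e. $M'\mathbf{z} \neq \mathbf{0}$.
   Context: Here $p = 4$. For $a \in \{0,1\}$, $a^* = 1-a$. The $8 \times 5$ model matrix $M$ has one row for each cell $(i_1,i_2,i_3) \in \{0,1\}^3$, equal to $\big(1, (-1)^{i_1}, (-1)^{i_2}, (-1)^{i_3}, (-1)^{i_1+i_2+i_3}\big)$ (the main effect model of the $2^{4-1}$ design with defining relation $ABCD = I$). Equivalently, $M'\mathbf{z} = \mathbf{0}$ iff for each $m \in \{1,2,3\}$ and $a \in \{0,1\}$, $\sum_{i_m = a} z(i_1i_2i_3) = 0$, and the sums of $z$ over cells with $i_1+i_2+i_3$ even and over cells with $i_1+i_2+i_3$ odd are both $0$. *)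

theory Defs
  imports Main
begin

definition cells :: "(nat \<times> nat \<times> nat) set" where
  "cells = {0,1} \<times> {0,1} \<times> {0,1}"

definition star :: "nat \<Rightarrow> nat" where
  "star a = 1 - a"

definition M :: "nat \<times> nat \<times> nat \<Rightarrow> nat \<Rightarrow> int" where
  "M c j = (case c of (i1, i2, i3) \<Rightarrow>
     [1, (-1) ^ i1, (-1) ^ i2, (-1) ^ i3, (-1) ^ (i1 + i2 + i3)] ! j)"

definition is_move :: "(nat \<times> nat \<times> nat \<Rightarrow> int) \<Rightarrow> bool" where
  "is_move z \<longleftrightarrow> (\<forall>j<5. (\<Sum>c\<in>cells. M c j * z c) = 0)"

end

theory Submission
  imports Defs
begin

(* For a move, the sum of z over the four cells of any of the three patterns vanishes:
   four times the indicator of such a pattern is an integer combination of the columns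
   of M. With s_m = (-1)^(i_m) and x_m = (-1)^(k_m) for a cell k, the indicator of
   pattern (1) is (2 - s1 x1 + s2 x2 + s3 x3 + s1 s2 s3 x1 x2 x3) / 4, and symmetrically
   for (2) and (3). Four positive integers cannot sum to zero. *)

lemma is_move_column_sums:
  assumes "is_move z"
  shows "z (0,0,0) + z (0,0,1) + z (0,1,0) + z (0,1,1) + z (1,0,0) + z (1,0,1) + z (1,1,0) + z (1,1,1) = 0"
    and "z (0,0,0) + z (0,0,1) + z (0,1,0) + z (0,1,1) - z (1,0,0) - z (1,0,1) - z (1,1,0) - z (1,1,1) = 0"
    and "z (0,0,0) + z (0,0,1) - z (0,1,0) - z (0,1,1) + z (1,0,0) + z (1,0,1) - z (1,1,0) - z (1,1,1) = 0"
    and "z (0,0,0) - z (0,0,1) + z (0,1,0) - z (0,1,1) + z (1,0,0) - z (1,0,1) + z (1,1,0) - z (1,1,1) = 0"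
    and "z (0,0,0) - z (0,0,1) - z (0,1,0) + z (0,1,1) - z (1,0,0) + z (1,0,1) + z (1,1,0) - z (1,1,1) = 0"
proof -
  have cells: "cells = {(0,0,0),(0,0,1),(0,1,0),(0,1,1),(1,0,0),(1,0,1),(1,1,0),(1,1,1)}"
    by (auto simp: cells_def)
  have column: "(\<Sum>c\<in>cells. M c j * z c) = 0" if "j < 5" for j
    using assms that by (simp add: is_move_def)
  show "z (0,0,0) + z (0,0,1) + z (0,1,0) + z (0,1,1) + z (1,0,0) + z (1,0,1) + z (1,1,0) + z (1,1,1) = 0"
    using column[of 0] by (simp add: cells M_def)
  show "z (0,0,0) + z (0,0,1) + z (0,1,0) + z (0,1,1) - z (1,0,0) - z (1,0,1) - z (1,1,0) - z (1,1,1) = 0"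
    using column[of 1] by (simp add: cells M_def algebra_simps)
  show "z (0,0,0) + z (0,0,1) - z (0,1,0) - z (0,1,1) + z (1,0,0) + z (1,0,1) - z (1,1,0) - z (1,1,1) = 0"
    using column[of 2] by (simp add: cells M_def algebra_simps)
  show "z (0,0,0) - z (0,0,1) + z (0,1,0) - z (0,1,1) + z (1,0,0) - z (1,0,1) + z (1,1,0) - z (1,1,1) = 0"
    using column[of 3] by (simp add: cells M_def algebra_simps)
  show "z (0,0,0) - z (0,0,1) - z (0,1,0) + z (0,1,1) - z (1,0,0) + z (1,0,1) + z (1,1,0) - z (1,1,1) = 0"
    using column[of 4] by (simp add: cells M_def algebra_simps numeral_eq_Suc)
qed

lemma is_move_pattern_sums:
  assumes "is_move z" and "i1 \<in> {0,1}" and "i2 \<in> {0,1}" and "i3 \<in> {0,1}"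
  shows "z (i1, i2, i3) + z (star i1, i2, i3) + z (star i1, star i2, i3) + z (star i1, i2, star i3) = 0"
    and "z (i1, i2, i3) + z (i1, star i2, i3) + z (star i1, star i2, i3) + z (i1, star i2, star i3) = 0"
    and "z (i1, i2, i3) + z (i1, i2, star i3) + z (star i1, i2, star i3) + z (i1, star i2, star i3) = 0"
  using assms(2-4) is_move_column_sums[OF assms(1)] by (auto simp: star_def)

theorem lemma1:
  fixes z :: "nat \<times> nat \<times> nat \<Rightarrow> int"
  assumes "\<exists>i1\<in>{0,1}. \<exists>i2\<in>{0,1}. \<exists>i3\<in>{0,1}.
     (z (i1, i2, i3) > 0 \<and> z (star i1, i2, i3) > 0 \<and> z (star i1, star i2, i3) > 0
        \<and> z (star i1, i2, star i3) > 0)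
   \<or> (z (i1, i2, i3) > 0 \<and> z (i1, star i2, i3) > 0 \<and> z (star i1, star i2, i3) > 0
        \<and> z (i1, star i2, star i3) > 0)
   \<or> (z (i1, i2, i3) > 0 \<and> z (i1, i2, star i3) > 0 \<and> z (star i1, i2, star i3) > 0
        \<and> z (i1, star i2, star i3) > 0)"
  shows "\<not> is_move z"
proof
  assume move: "is_move z"
  from assms obtain i1 i2 i3 where i: "i1 \<in> {0,1}" "i2 \<in> {0,1}" "i3 \<in> {0,1}"
    and positive: "(z (i1, i2, i3) > 0 \<and> z (star i1, i2, i3) > 0 \<and> z (star i1, star i2, i3) > 0
        \<and> z (star i1, i2, star i3) > 0)
   \<or> (z (i1, i2, i3) > 0 \<and> z (i1, star i2, i3) > 0 \<and> z (star i1, star i2, i3) > 0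
        \<and> z (i1, star i2, star i3) > 0)
   \<or> (z (i1, i2, i3) > 0 \<and> z (i1, i2, star i3) > 0 \<and> z (star i1, i2, star i3) > 0
        \<and> z (i1, star i2, star i3) > 0)"
    by blast
  show False
    using positive is_move_pattern_sums[OF move i] by linarith
qed

end
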